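(* Let $(\mathcal{M}^n,g)$ be a mixed super quasi-Einstein manifold (notation as in the context) admitting a Ricci soliton $(g,\xi_1,\lambda)$, i.e. a Ricci-Bourguignon soliton $(g,\xi_1,\lambda,\rho)$ with $\rho=0$. Then the soliton is expanding, steady, or shrinking according as $\Psi_1+\Psi_2>0$, $\Psi_1+\Psi_2=0$, or $\Psi_1+\Psi_2<0$, respectively.
   Context: $(\mathcal{M}^n,g)$, $n\ge3$, is a non-flat Riemannian manifold with Ricci tensor $\mathrm{Ric}$ and scalar curvature $r$. It is mixed super quasi-Einstein if $\mathrm{Ric}\not\equiv0$ and $\mathrm{Ric}(X,Y)=\Psi_1 g(X,Y)+\Psi_2\mathcal{A}(X)\mathcal{A}(Y)+\Psi_3\mathcal{B}(X)\mathcal{B}(Y)+\Psi_4(\mathcal{A}(X)\mathcal{B}(Y)+\mathcal{B}(X)\mathcal{A}(Y))+\Psi_5\mathcal{D}(X,Y)$, where $\Psi_i$ are smooth functions with $\Psi_2,\Psi_3,\Psi_4,\Psi_5\neq0$; $\xi_1,\xi_2$ are vector fields with $g(\xi_1,\xi_1)=g(\xi_2,\xi_2)=1$, $g(\xi_1,\xi_2)=0$; $\mathcal{A}=g(\cdot,\xi_1)$, $\mathcal{B}=g(\cdot,\xi_2)$; $\mathcal{D}$ is a symmetric trace-free $(0,2)$-tensor with $\mathcal{D}(X,\xi_1)=0$. A Ricci-Bourguignon soliton $(g,U,\lambda,\rho)$: a vector field $U$ and constants $\lambda,\rho$ with $\frac12\mathcal{L}_Ug+\mathrm{Ric}=(\lambda+\rho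 r)g$. Convention of the paper: the soliton is called expanding, steady, or shrinking according as $\lambda>0$, $\lambda=0$, or $\lambda<0$. *)

theory Defs
  imports "HOL-Analysis.Analysis"
begin

text \<open>Local-coordinate model of a Riemannian manifold: an open set M of R^n
 (a coordinate chart), a metric given by its component matrix field g.
 All index sums run over the finite index type 'n.\<close>

definition pd :: "(real^'n \<Rightarrow> real) \<Rightarrow> 'n \<Rightarrow> real^'n \<Rightarrow> real" where
  "pd f i x = deriv (\<lambda>t. f (x + t *\<^sub>R axis i 1)) 0"

fun iter_pd :: "'n list \<Rightarrow> (real^'n \<Rightarrow> real) \<Rightarrow> real^'n \<Rightarrow> real" where
  "iter_pd [] f = f"
| "iter_pd (i # is) f = pd (iter_pd is f) i"

definition smooth_fun :: "(real^'n) set \<Rightarrow> (real^'n \<Rightarrow> real) \<Rightarrow> bool" where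
  "smooth_fun M f \<longleftrightarrow> (\<forall>is. \<forall>x\<in>M. iter_pd is f differentiable (at x))"

definition smooth_vf :: "(real^'n) set \<Rightarrow> (real^'n \<Rightarrow> real^'n) \<Rightarrow> bool" where
  "smooth_vf M U \<longleftrightarrow> (\<forall>k. smooth_fun M (\<lambda>x. U x $ k))"

definition smooth_tensor :: "(real^'n) set \<Rightarrow> (real^'n \<Rightarrow> real^'n^'n) \<Rightarrow> bool" where
  "smooth_tensor M T \<longleftrightarrow> (\<forall>i j. smooth_fun M (\<lambda>x. T x $ i $ j))"

definition riemannian_metric :: "(real^'n) set \<Rightarrow> (real^'n \<Rightarrow> real^'n^'n) \<Rightarrow> bool" where
  "riemannian_metric M g \<longleftrightarrow> open M \<and> M \<noteq> {} \<and> smooth_tensor M g \<and>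
     (\<forall>x\<in>M. transpose (g x) = g x \<and> (\<forall>v. v \<noteq> 0 \<longrightarrow> v \<bullet> (g x *v v) > 0))"

definition tens :: "(real^'n \<Rightarrow> real^'n^'n) \<Rightarrow> real^'n \<Rightarrow> real^'n \<Rightarrow> real^'n \<Rightarrow> real" where
  "tens T x X Y = (\<Sum>i\<in>UNIV. \<Sum>j\<in>UNIV. T x $ i $ j * X $ i * Y $ j)"

definition ginv :: "(real^'n \<Rightarrow> real^'n^'n) \<Rightarrow> real^'n \<Rightarrow> real^'n^'n" where
  "ginv g x = matrix_inv (g x)"

definition christoffel :: "(real^'n \<Rightarrow> real^'n^'n) \<Rightarrow> 'n \<Rightarrow> 'n \<Rightarrow> 'n \<Rightarrow> real^'n \<Rightarrow> real" where
  "christoffel g k i j x = (1/2) * (\<Sum>l\<in>UNIV. ginv g x $ k $ l *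
      (pd (\<lambda>y. g y $ j $ l) i x + pd (\<lambda>y. g y $ i $ l) j x - pd (\<lambda>y. g y $ i $ j) l x))"

text \<open>Riemann curvature components R^l_{ijk}, with R(d_i,d_j)d_k = sum_l R^l_{ijk} d_l,
  R(X,Y) = nabla_X nabla_Y - nabla_Y nabla_X - nabla_[X,Y].\<close>
definition riemann :: "(real^'n \<Rightarrow> real^'n^'n) \<Rightarrow> 'n \<Rightarrow> 'n \<Rightarrow> 'n \<Rightarrow> 'n \<Rightarrow> real^'n \<Rightarrow> real" where
  "riemann g l i j k x = pd (christoffel g l j k) i x - pd (christoffel g l i k) j x
     + (\<Sum>m\<in>UNIV. christoffel g m j k x * christoffel g l i m x
                  - christoffel g m i k x * christoffel g l j m x)"

text \<open>Ricci tensor Ric_{jk} = sum_i R^i_{ijk} (trace of X \<mapsto> R(X,Y)Z).\<close>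
definition ricci :: "(real^'n \<Rightarrow> real^'n^'n) \<Rightarrow> real^'n \<Rightarrow> real^'n^'n" where
  "ricci g x = (\<chi> j k. \<Sum>i\<in>UNIV. riemann g i i j k x)"

definition scalar_curv :: "(real^'n \<Rightarrow> real^'n^'n) \<Rightarrow> real^'n \<Rightarrow> real" where
  "scalar_curv g x = (\<Sum>i\<in>UNIV. \<Sum>j\<in>UNIV. ginv g x $ i $ j * ricci g x $ i $ j)"

definition flat :: "(real^'n) set \<Rightarrow> (real^'n \<Rightarrow> real^'n^'n) \<Rightarrow> bool" where
  "flat M g \<longleftrightarrow> (\<forall>x\<in>M. \<forall>l i j k. riemann g l i j k x = 0)"

definition lie_deriv_metric :: "(real^'n \<Rightarrow> real^'n) \<Rightarrow> (real^'n \<Rightarrow> real^'n^'n) \<Rightarrow> real^'n \<Rightarrow> real^'n^'n" where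
  "lie_deriv_metric U g x = (\<chi> i j. \<Sum>k\<in>UNIV.
      U x $ k * pd (\<lambda>y. g y $ i $ j) k x
      + g x $ k $ j * pd (\<lambda>y. U y $ k) i x
      + g x $ i $ k * pd (\<lambda>y. U y $ k) j x)"

definition mixed_super_quasi_einstein ::
  "(real^'n) set \<Rightarrow> (real^'n \<Rightarrow> real^'n^'n) \<Rightarrow>
   (real^'n \<Rightarrow> real) \<Rightarrow> (real^'n \<Rightarrow> real) \<Rightarrow> (real^'n \<Rightarrow> real) \<Rightarrow> (real^'n \<Rightarrow> real) \<Rightarrow> (real^'n \<Rightarrow> real) \<Rightarrow>
   (real^'n \<Rightarrow> real^'n) \<Rightarrow> (real^'n \<Rightarrow> real^'n) \<Rightarrow> (real^'n \<Rightarrow> real^'n^'n) \<Rightarrow> bool" where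
  "mixed_super_quasi_einstein M g \<Psi>1 \<Psi>2 \<Psi>3 \<Psi>4 \<Psi>5 \<xi>1 \<xi>2 D \<longleftrightarrow>
     riemannian_metric M g \<and>
     (\<exists>x\<in>M. ricci g x \<noteq> 0) \<and>
     smooth_fun M \<Psi>1 \<and> smooth_fun M \<Psi>2 \<and> smooth_fun M \<Psi>3 \<and> smooth_fun M \<Psi>4 \<and> smooth_fun M \<Psi>5 \<and>
     (\<forall>x\<in>M. \<Psi>2 x \<noteq> 0 \<and> \<Psi>3 x \<noteq> 0 \<and> \<Psi>4 x \<noteq> 0 \<and> \<Psi>5 x \<noteq> 0) \<and>
     smooth_vf M \<xi>1 \<and> smooth_vf M \<xi>2 \<and> smooth_tensor M D \<and>
     (\<forall>x\<in>M. tens g x (\<xi>1 x) (\<xi>1 x) = 1 \<and> tens g x (\<xi>2 x) (\<xi>2 x) = 1 \<and>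
             tens g x (\<xi>1 x) (\<xi>2 x) = 0) \<and>
     (\<forall>x\<in>M. transpose (D x) = D x \<and>
             (\<Sum>i\<in>UNIV. \<Sum>j\<in>UNIV. ginv g x $ i $ j * D x $ i $ j) = 0 \<and>
             (\<forall>X. tens D x X (\<xi>1 x) = 0)) \<and>
     (\<forall>x\<in>M. \<forall>X Y.
        let A = (\<lambda>Z. tens g x Z (\<xi>1 x)); B = (\<lambda>Z. tens g x Z (\<xi>2 x)) in
        tens (ricci g) x X Y = \<Psi>1 x * tens g x X Y + \<Psi>2 x * A X * A Y + \<Psi>3 x * B X * B Y
          + \<Psi>4 x * (A X * B Y + B X * A Y) + \<Psi>5 x * tens D x X Y)"

definition ricci_bourguignon_soliton ::
  "(real^'n) set \<Rightarrow> (real^'n \<Rightarrow> real^'n^'n) \<Rightarrow> (real^'n \<Rightarrow> real^'n) \<Rightarrow> real \<Rightarrow> real \<Rightarrow> bool" where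
  "ricci_bourguignon_soliton M g U lam \<rho> \<longleftrightarrow> smooth_vf M U \<and>
     (\<forall>x\<in>M. \<forall>X Y. (1/2) * tens (lie_deriv_metric U g) x X Y + tens (ricci g) x X Y
                   = (lam + \<rho> * scalar_curv g x) * tens g x X Y)"

text \<open>Paper's convention.\<close>
definition expanding :: "real \<Rightarrow> bool" where "expanding lam \<longleftrightarrow> lam > 0"
definition steady :: "real \<Rightarrow> bool" where "steady lam \<longleftrightarrow> lam = 0"
definition shrinking :: "real \<Rightarrow> bool" where "shrinking lam \<longleftrightarrow> lam < 0"

end

theory Submission
  imports Defs
begin

text \<open>Evaluate the soliton equation on the pair (\<xi>1, \<xi>1). Since g(\<xi>1, \<xi>1) = 1 is constant,
  (L_\<xi>1 g)(\<xi>1, \<xi>1) = \<xi>1(g(\<xi>1, \<xi>1)) = 0, so \<lambda> = Ric(\<xi>1, \<xi>1). In the mixed super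
  quasi-Einstein form of Ric we have A(\<xi>1) = 1, B(\<xi>1) = 0 and D(\<xi>1, \<xi>1) = 0, whence
  \<lambda> = \<Psi>1 + \<Psi>2 at every point, and the sign of \<lambda> is the sign of \<Psi>1 + \<Psi>2.\<close>

lemma smooth_fun_differentiable:
  assumes "smooth_fun M f" "x \<in> M"
  shows "f differentiable (at x)"
  using assms unfolding smooth_fun_def by (metis iter_pd.simps(1))

lemma pd_eq_derivative_axis:
  assumes d: "(f has_derivative f') (at x)"
  shows "pd f k x = f' (axis k 1)"
proof -
  have lin: "linear f'" using d has_derivative_linear by blast
  have line: "((\<lambda>t::real. x + t *\<^sub>R axis k 1) has_derivative (\<lambda>t. t *\<^sub>R axis k 1)) (at 0)"
    by (auto intro!: derivative_eq_intros)
  have "((f \<circ> (\<lambda>t::real. x + t *\<^sub>R axis k 1)) has_derivative (f' \<circ> (\<lambda>t. t *\<^sub>R axis k 1))) (at 0)"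
    by (rule diff_chain_at[OF line]) (simp add: d)
  moreover have "f' \<circ> (\<lambda>t. t *\<^sub>R axis k 1) = (\<lambda>t. f' (axis k 1) * t)"
    using linear_scale[OF lin] by (auto simp: fun_eq_iff)
  ultimately have "((\<lambda>t. f (x + t *\<^sub>R axis k 1)) has_field_derivative f' (axis k 1)) (at 0)"
    by (simp add: has_field_derivative_def o_def)
  then show ?thesis unfolding pd_def by (rule DERIV_imp_deriv)
qed

lemma pd_constant_on_open:
  assumes "open M" "x \<in> M" "\<And>y. y \<in> M \<Longrightarrow> f y = c"
  shows "pd f k x = 0"
proof -
  let ?S = "{t::real. x + t *\<^sub>R axis k 1 \<in> M}"
  have "continuous_on UNIV (\<lambda>t::real. x + t *\<^sub>R axis k 1)"
    by (intro continuous_intros)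
  then have "open ?S"
    using open_vimage[OF assms(1)] by (simp add: vimage_def)
  have "((\<lambda>t::real. c) has_field_derivative 0) (at 0)" by simp
  then have "((\<lambda>t. f (x + t *\<^sub>R axis k 1)) has_field_derivative 0) (at 0)"
    by (rule has_field_derivative_transform_within_open[where S="?S"]) (use \<open>open ?S\<close> assms in auto)
  then show ?thesis unfolding pd_def by (rule DERIV_imp_deriv)
qed

lemma sum_swap_outer_to_inner:
  "(\<Sum>k\<in>A. \<Sum>i\<in>B. \<Sum>j\<in>C. f k i j) = (\<Sum>i\<in>B. \<Sum>j\<in>C. \<Sum>k\<in>A. f k i j)"
  by (subst sum.swap) (simp add: sum.swap[of _ C A])

lemma sum_product_rule_reindex:
  fixes u :: "'n::finite \<Rightarrow> real"
  shows "(\<Sum>k\<in>UNIV. u k * (\<Sum>i\<in>UNIV. \<Sum>j\<in>UNIV.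
            Q i j k * u i * u j + h i j * P i k * u j + h i j * u i * P j k))
       = (\<Sum>i\<in>UNIV. \<Sum>j\<in>UNIV. (\<Sum>k\<in>UNIV. u k * Q i j k + h k j * P k i + h i k * P k j) * u i * u j)"
proof -
  have "(\<Sum>k\<in>UNIV. \<Sum>i\<in>UNIV. \<Sum>j\<in>UNIV. u k * Q i j k * u i * u j)
      = (\<Sum>i\<in>UNIV. \<Sum>j\<in>UNIV. \<Sum>k\<in>UNIV. u k * Q i j k * u i * u j)"
    by (rule sum_swap_outer_to_inner)
  moreover have "(\<Sum>k\<in>UNIV. \<Sum>i\<in>UNIV. \<Sum>j\<in>UNIV. h i j * P i k * u j * u k)
      = (\<Sum>i\<in>UNIV. \<Sum>j\<in>UNIV. \<Sum>k\<in>UNIV. h k j * P k i * u i * u j)"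
    by (subst sum.swap[of _ UNIV UNIV]) (simp add: ac_simps)
  moreover have "(\<Sum>k\<in>UNIV. \<Sum>i\<in>UNIV. \<Sum>j\<in>UNIV. h i j * u i * P j k * u k)
      = (\<Sum>i\<in>UNIV. \<Sum>j\<in>UNIV. \<Sum>k\<in>UNIV. h i k * P k j * u i * u j)"
    by (subst sum.swap[of _ UNIV UNIV]) (simp add: ac_simps)
  ultimately show ?thesis
    by (simp add: sum_distrib_left sum_distrib_right sum.distrib algebra_simps)
qed

lemma tens_lie_deriv_metric_self:
  fixes g :: "real^'n \<Rightarrow> real^'n^'n" and U :: "real^'n \<Rightarrow> real^'n"
  assumes gd: "\<And>i j. (\<lambda>y. g y $ i $ j) differentiable (at x)"
    and Ud: "\<And>i. (\<lambda>y. U y $ i) differentiable (at x)"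
  shows "tens (lie_deriv_metric U g) x (U x) (U x)
       = (\<Sum>k\<in>UNIV. U x $ k * pd (\<lambda>y. tens g y (U y) (U y)) k x)"
proof -
  define G where "G i j = frechet_derivative (\<lambda>y. g y $ i $ j) (at x)" for i j
  define V where "V i = frechet_derivative (\<lambda>y. U y $ i) (at x)" for i
  have G: "((\<lambda>y. g y $ i $ j) has_derivative G i j) (at x)" for i j
    unfolding G_def using gd frechet_derivative_works by blast
  have V: "((\<lambda>y. U y $ i) has_derivative V i) (at x)" for i
    unfolding V_def using Ud frechet_derivative_works by blast
  have "((\<lambda>y. g y $ i $ j * U y $ i * U y $ j) has_derivative (\<lambda>v.
      G i j v * U x $ i * U x $ j + g x $ i $ j * V i v * U x $ j + g x $ i $ j * U x $ i * V j v)) (at x)"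
    for i j
    by (rule has_derivative_eq_rhs, (rule has_derivative_mult G V)+) (auto simp: fun_eq_iff algebra_simps)
  then have "((\<lambda>y. tens g y (U y) (U y)) has_derivative (\<lambda>v. \<Sum>i\<in>UNIV. \<Sum>j\<in>UNIV.
      G i j v * U x $ i * U x $ j + g x $ i $ j * V i v * U x $ j + g x $ i $ j * U x $ i * V j v)) (at x)"
    unfolding tens_def by (intro has_derivative_sum)
  from pd_eq_derivative_axis[OF this]
  have "pd (\<lambda>y. tens g y (U y) (U y)) k x = (\<Sum>i\<in>UNIV. \<Sum>j\<in>UNIV.
      pd (\<lambda>y. g y $ i $ j) k x * U x $ i * U x $ j + g x $ i $ j * pd (\<lambda>y. U y $ i) k x * U x $ j
      + g x $ i $ j * U x $ i * pd (\<lambda>y. U y $ j) k x)" for k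
    by (simp add: pd_eq_derivative_axis[OF G] pd_eq_derivative_axis[OF V])
  then have "(\<Sum>k\<in>UNIV. U x $ k * pd (\<lambda>y. tens g y (U y) (U y)) k x)
      = (\<Sum>k\<in>UNIV. U x $ k * (\<Sum>i\<in>UNIV. \<Sum>j\<in>UNIV.
          pd (\<lambda>y. g y $ i $ j) k x * U x $ i * U x $ j + g x $ i $ j * pd (\<lambda>y. U y $ i) k x * U x $ j
          + g x $ i $ j * U x $ i * pd (\<lambda>y. U y $ j) k x))"
    by simp
  also have "\<dots> = tens (lie_deriv_metric U g) x (U x) (U x)"
    unfolding sum_product_rule_reindex tens_def lie_deriv_metric_def by simp
  finally show ?thesis ..
qed

lemma tens_lie_deriv_metric_unit_field:
  fixes g :: "real^'n \<Rightarrow> real^'n^'n" and U :: "real^'n \<Rightarrow> real^'n"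
  assumes "riemannian_metric M g" "smooth_vf M U" "x \<in> M"
    and unit: "\<And>y. y \<in> M \<Longrightarrow> tens g y (U y) (U y) = 1"
  shows "tens (lie_deriv_metric U g) x (U x) (U x) = 0"
proof -
  have "open M" "smooth_tensor M g"
    using assms(1) unfolding riemannian_metric_def by auto
  have "(\<lambda>y. g y $ i $ j) differentiable (at x)" for i j
    using \<open>smooth_tensor M g\<close> \<open>x \<in> M\<close> smooth_fun_differentiable
    unfolding smooth_tensor_def by blast
  moreover have "(\<lambda>y. U y $ i) differentiable (at x)" for i
    using assms(2,3) smooth_fun_differentiable unfolding smooth_vf_def by blast
  ultimately have "tens (lie_deriv_metric U g) x (U x) (U x)
      = (\<Sum>k\<in>UNIV. U x $ k * pd (\<lambda>y. tens g y (U y) (U y)) k x)"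
    by (rule tens_lie_deriv_metric_self)
  also have "\<dots> = 0"
    using pd_constant_on_open[OF \<open>open M\<close> \<open>x \<in> M\<close> unit] by simp
  finally show ?thesis .
qed

lemma ricci_soliton_unit_field_lambda:
  assumes "riemannian_metric M g" "ricci_bourguignon_soliton M g U lam 0" "x \<in> M"
    and unit: "\<And>y. y \<in> M \<Longrightarrow> tens g y (U y) (U y) = 1"
  shows "lam = tens (ricci g) x (U x) (U x)"
proof -
  have "smooth_vf M U"
    using assms(2) unfolding ricci_bourguignon_soliton_def by blast
  then have "tens (lie_deriv_metric U g) x (U x) (U x) = 0"
    using tens_lie_deriv_metric_unit_field assms(1,3) unit by blast
  moreover have "1/2 * tens (lie_deriv_metric U g) x (U x) (U x) + tens (ricci g) x (U x) (U x)
      = (lam + 0 * scalar_curv g x) * tens g x (U x) (U x)"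
    using assms(2,3) unfolding ricci_bourguignon_soliton_def by blast
  ultimately show ?thesis
    using unit[OF assms(3)] by simp
qed

lemma mixed_super_quasi_einstein_ricci_generator:
  assumes "mixed_super_quasi_einstein M g \<Psi>1 \<Psi>2 \<Psi>3 \<Psi>4 \<Psi>5 \<xi>1 \<xi>2 D" "x \<in> M"
  shows "tens (ricci g) x (\<xi>1 x) (\<xi>1 x) = \<Psi>1 x + \<Psi>2 x"
proof -
  have "tens g x (\<xi>1 x) (\<xi>1 x) = 1" "tens g x (\<xi>1 x) (\<xi>2 x) = 0" "tens D x (\<xi>1 x) (\<xi>1 x) = 0"
    using assms unfolding mixed_super_quasi_einstein_def by blast+
  then show ?thesis
    using assms unfolding mixed_super_quasi_einstein_def Let_def by simp
qed

theorem mainTheorem7: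
  fixes M :: "(real^'n) set" and g :: "real^'n \<Rightarrow> real^'n^'n"
    and \<Psi>1 \<Psi>2 \<Psi>3 \<Psi>4 \<Psi>5 :: "real^'n \<Rightarrow> real"
    and \<xi>1 \<xi>2 :: "real^'n \<Rightarrow> real^'n" and D :: "real^'n \<Rightarrow> real^'n^'n"
    and lam :: real
  assumes "CARD('n) \<ge> 3"
    and "\<not> flat M g"
    and "mixed_super_quasi_einstein M g \<Psi>1 \<Psi>2 \<Psi>3 \<Psi>4 \<Psi>5 \<xi>1 \<xi>2 D"
    and "ricci_bourguignon_soliton M g \<xi>1 lam 0"
  shows "\<forall>x\<in>M. (expanding lam \<longleftrightarrow> \<Psi>1 x + \<Psi>2 x > 0) \<and>
               (steady lam \<longleftrightarrow> \<Psi>1 x + \<Psi>2 x = 0) \<and>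
               (shrinking lam \<longleftrightarrow> \<Psi>1 x + \<Psi>2 x < 0)"
proof
  fix x assume "x \<in> M"
  have "riemannian_metric M g"
    and unit: "\<And>y. y \<in> M \<Longrightarrow> tens g y (\<xi>1 y) (\<xi>1 y) = 1"
    using assms(3) unfolding mixed_super_quasi_einstein_def by blast+
  then have "lam = tens (ricci g) x (\<xi>1 x) (\<xi>1 x)"
    using ricci_soliton_unit_field_lambda assms(4) \<open>x \<in> M\<close> by blast
  also have "\<dots> = \<Psi>1 x + \<Psi>2 x"
    using mixed_super_quasi_einstein_ricci_generator assms(3) \<open>x \<in> M\<close> by blast
  finally show "(expanding lam \<longleftrightarrow> \<Psi>1 x + \<Psi>2 x > 0) \<and> (steady lam \<longleftrightarrow> \<Psi>1 x + \<Psi>2 x = 0) \<and>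
      (shrinking lam \<longleftrightarrow> \<Psi>1 x + \<Psi>2 x < 0)"
    by (simp add: expanding_def steady_def shrinking_def)
qed

end
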